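(* Let $R=\begin{pmatrix} A & M\\ N & B\end{pmatrix}$ be a Morita context ring such that $MN$ is a nilpotent ideal of $A$ and $NM$ is a nilpotent ideal of $B$. Then $R$ is a CSNC ring if and only if both $A$ and $B$ are CSNC rings.
   Context: All rings are associative with identity $1$. For a ring $R$, $\mathrm{Id}(R)$, $U(R)$, $\mathrm{Nil}(R)$ denote the sets of idempotents, units and nilpotent elements. An element $a\in R$ is clean if $a=e+u$ for some $e\in\mathrm{Id}(R)$, $u\in U(R)$. An element $a$ is strongly nil-clean if $a=e+q$ with $e\in \mathrm{Id}(R)$, $q\in\mathrm{Nil}(R)$ and $eq=qe$. A ring $R$ is called CSNC if every clean element of $R$ is strongly nil-clean. A Morita context ring: $A,B$ are rings, $M$ is an $(A,B)$-bimodule, $N$ is a $(B,A)$-bimodule, and $\phi:M\otimes_B N\to A$, $\psi:N\otimes_A M\to B$ are bimodule homomorphisms satisfying $\phi(m\otimes n)m'=m\psi(n\otimes m')$ and $\psi(n\otimes m)n'=n\phi(m\otimes n')$; writing $mn=\phi(m\otimes n)$, $nm=\psi(n\otimes m)$, the set of matrices $\begin{pmatrix} a & m\\ n & b\end{pmatrix}$ with the usual matrix operations is an associative ring. $MN=\mathrm{Im}\,\phi$ and $NM=\mathrm{Im}\,\psi$ are the trace ideals. *)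

theory Defs
  imports Main
begin

definition idem_op :: "('r \<Rightarrow> 'r \<Rightarrow> 'r) \<Rightarrow> 'r \<Rightarrow> bool" where
  "idem_op mul e \<longleftrightarrow> mul e e = e"

definition unit_op :: "'r \<Rightarrow> ('r \<Rightarrow> 'r \<Rightarrow> 'r) \<Rightarrow> 'r \<Rightarrow> bool" where
  "unit_op one mul u \<longleftrightarrow> (\<exists>v. mul u v = one \<and> mul v u = one)"

definition nil_op :: "'r \<Rightarrow> 'r \<Rightarrow> ('r \<Rightarrow> 'r \<Rightarrow> 'r) \<Rightarrow> 'r \<Rightarrow> bool" where
  "nil_op zero one mul q \<longleftrightarrow> (\<exists>k::nat. (mul q ^^ k) one = zero)"

definition clean_op ::
  "'r \<Rightarrow> ('r \<Rightarrow> 'r \<Rightarrow> 'r) \<Rightarrow> ('r \<Rightarrow> 'r \<Rightarrow> 'r) \<Rightarrow> 'r \<Rightarrow> bool" where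
  "clean_op one add mul a \<longleftrightarrow>
     (\<exists>e u. idem_op mul e \<and> unit_op one mul u \<and> a = add e u)"

definition snc_op ::
  "'r \<Rightarrow> 'r \<Rightarrow> ('r \<Rightarrow> 'r \<Rightarrow> 'r) \<Rightarrow> ('r \<Rightarrow> 'r \<Rightarrow> 'r) \<Rightarrow> 'r \<Rightarrow> bool" where
  "snc_op zero one add mul a \<longleftrightarrow>
     (\<exists>e q. idem_op mul e \<and> nil_op zero one mul q \<and> mul e q = mul q e \<and> a = add e q)"

definition CSNC_op ::
  "'r \<Rightarrow> 'r \<Rightarrow> ('r \<Rightarrow> 'r \<Rightarrow> 'r) \<Rightarrow> ('r \<Rightarrow> 'r \<Rightarrow> 'r) \<Rightarrow> bool" where
  "CSNC_op zero one add mul \<longleftrightarrow>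
     (\<forall>a. clean_op one add mul a \<longrightarrow> snc_op zero one add mul a)"

definition CSNC :: "'a::ring_1 itself \<Rightarrow> bool" where
  "CSNC (_::'a itself) \<longleftrightarrow> CSNC_op (0::'a) 1 (+) (*)"

text \<open>M is an (A,B)-bimodule via lM, rM; N is a (B,A)-bimodule via lN, rN;
  phi, psi are the bimodule maps M (x)_B N -> A and N (x)_A M -> B, written
  as balanced biadditive maps (which is what a map out of the tensor product is).\<close>

definition bimodule ::
  "('a::ring_1 \<Rightarrow> 'm::ab_group_add \<Rightarrow> 'm) \<Rightarrow> ('m \<Rightarrow> 'b::ring_1 \<Rightarrow> 'm) \<Rightarrow> bool" where
  "bimodule l r \<longleftrightarrow>
     (\<forall>a m m'. l a (m + m') = l a m + l a m') \<and>
     (\<forall>a a' m. l (a + a') m = l a m + l a' m) \<and>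
     (\<forall>a a' m. l (a * a') m = l a (l a' m)) \<and>
     (\<forall>m. l 1 m = m) \<and>
     (\<forall>b m m'. r (m + m') b = r m b + r m' b) \<and>
     (\<forall>b b' m. r m (b + b') = r m b + r m b') \<and>
     (\<forall>b b' m. r m (b * b') = r (r m b) b') \<and>
     (\<forall>m. r m 1 = m) \<and>
     (\<forall>a m b. l a (r m b) = r (l a m) b)"

definition pairing ::
  "('a::ring_1 \<Rightarrow> 'm::ab_group_add \<Rightarrow> 'm) \<Rightarrow> ('m \<Rightarrow> 'b::ring_1 \<Rightarrow> 'm) \<Rightarrow>
   ('b \<Rightarrow> 'n::ab_group_add \<Rightarrow> 'n) \<Rightarrow> ('n \<Rightarrow> 'a \<Rightarrow> 'n) \<Rightarrow> ('m \<Rightarrow> 'n \<Rightarrow> 'a) \<Rightarrow> bool" where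
  "pairing lM rM lN rN phi \<longleftrightarrow>
     (\<forall>m m' n. phi (m + m') n = phi m n + phi m' n) \<and>
     (\<forall>m n n'. phi m (n + n') = phi m n + phi m n') \<and>
     (\<forall>m b n. phi (rM m b) n = phi m (lN b n)) \<and>
     (\<forall>a m n. phi (lM a m) n = a * phi m n) \<and>
     (\<forall>m n a. phi m (rN n a) = phi m n * a)"

definition morita_context ::
  "('a::ring_1 \<Rightarrow> 'm::ab_group_add \<Rightarrow> 'm) \<Rightarrow> ('m \<Rightarrow> 'b::ring_1 \<Rightarrow> 'm) \<Rightarrow>
   ('b \<Rightarrow> 'n::ab_group_add \<Rightarrow> 'n) \<Rightarrow> ('n \<Rightarrow> 'a \<Rightarrow> 'n) \<Rightarrow>
   ('m \<Rightarrow> 'n \<Rightarrow> 'a) \<Rightarrow> ('n \<Rightarrow> 'm \<Rightarrow> 'b) \<Rightarrow> bool" where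
  "morita_context lM rM lN rN phi psi \<longleftrightarrow>
     bimodule lM rM \<and> bimodule lN rN \<and>
     pairing lM rM lN rN phi \<and> pairing lN rN lM rM psi \<and>
     (\<forall>m n m'. lM (phi m n) m' = rM m (psi n m')) \<and>
     (\<forall>n m n'. lN (psi n m) n' = rN n (phi m n'))"

text \<open>The Morita context ring: elements (a, m, n, b) stand for the matrix [[a, m], [n, b]].\<close>

definition morita_add ::
  "('a::ring_1 \<times> 'm::ab_group_add \<times> 'n::ab_group_add \<times> 'b::ring_1) \<Rightarrow>
   ('a \<times> 'm \<times> 'n \<times> 'b) \<Rightarrow> ('a \<times> 'm \<times> 'n \<times> 'b)" where
  "morita_add x y = (case x of (a, m, n, b) \<Rightarrow> case y of (a', m', n', b') \<Rightarrow>
      (a + a', m + m', n + n', b + b'))"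

definition morita_mult ::
  "('a::ring_1 \<Rightarrow> 'm::ab_group_add \<Rightarrow> 'm) \<Rightarrow> ('m \<Rightarrow> 'b::ring_1 \<Rightarrow> 'm) \<Rightarrow>
   ('b \<Rightarrow> 'n::ab_group_add \<Rightarrow> 'n) \<Rightarrow> ('n \<Rightarrow> 'a \<Rightarrow> 'n) \<Rightarrow>
   ('m \<Rightarrow> 'n \<Rightarrow> 'a) \<Rightarrow> ('n \<Rightarrow> 'm \<Rightarrow> 'b) \<Rightarrow>
   ('a \<times> 'm \<times> 'n \<times> 'b) \<Rightarrow> ('a \<times> 'm \<times> 'n \<times> 'b) \<Rightarrow> ('a \<times> 'm \<times> 'n \<times> 'b)" where
  "morita_mult lM rM lN rN phi psi x y = (case x of (a, m, n, b) \<Rightarrow> case y of (a', m', n', b') \<Rightarrow>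
      (a * a' + phi m n', lM a m' + rM m b', rN n a' + lN b n', psi n m' + b * b'))"

definition morita_zero :: "'a::ring_1 \<times> 'm::ab_group_add \<times> 'n::ab_group_add \<times> 'b::ring_1" where
  "morita_zero = (0, 0, 0, 0)"

definition morita_one :: "'a::ring_1 \<times> 'm::ab_group_add \<times> 'n::ab_group_add \<times> 'b::ring_1" where
  "morita_one = (1, 0, 0, 1)"

definition morita_CSNC ::
  "('a::ring_1 \<Rightarrow> 'm::ab_group_add \<Rightarrow> 'm) \<Rightarrow> ('m \<Rightarrow> 'b::ring_1 \<Rightarrow> 'm) \<Rightarrow>
   ('b \<Rightarrow> 'n::ab_group_add \<Rightarrow> 'n) \<Rightarrow> ('n \<Rightarrow> 'a \<Rightarrow> 'n) \<Rightarrow>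
   ('m \<Rightarrow> 'n \<Rightarrow> 'a) \<Rightarrow> ('n \<Rightarrow> 'm \<Rightarrow> 'b) \<Rightarrow> bool" where
  "morita_CSNC lM rM lN rN phi psi \<longleftrightarrow>
     CSNC_op morita_zero morita_one morita_add (morita_mult lM rM lN rN phi psi)"

text \<open>Image of a map out of a tensor product: all finite sums of values on pure tensors.\<close>
definition trace_ideal :: "('m \<Rightarrow> 'n \<Rightarrow> 'a::ring_1) \<Rightarrow> 'a set" where
  "trace_ideal phi = {(\<Sum>i<k. phi (ms i) (ns i)) | (k::nat) ms ns. True}"

definition nilpotent_ideal :: "'a::ring_1 set \<Rightarrow> bool" where
  "nilpotent_ideal I \<longleftrightarrow>
     (\<exists>k::nat. \<forall>xs. length xs = k \<and> set xs \<subseteq> I \<longrightarrow> prod_list xs = 0)"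

end

theory Submission
  imports Defs "HOL-Computational_Algebra.Polynomial" "HOL-Library.Product_Plus"
begin

(* An element a of a ring is strongly nil-clean iff a - a^2 is nilpotent: the Newton iteration
   f \<mapsto> 3f^2 - 2f^3, started at a, converges in finitely many steps to an idempotent that is a
   polynomial in a and differs from a by a multiple of a - a^2.
   In the Morita ring R, idempotents and units lift modulo the nilpotent trace ideals MN and NM,
   so the diagonal corners of a clean element of R are clean in A and B. If A and B are CSNC,
   the corners of X - X^2 are therefore nilpotent modulo MN and NM; hence some power of X - X^2
   has its diagonal in the trace ideals, and such a matrix is nilpotent because MN and NM are.
   Conversely a \<mapsto> diag(a, 1) and b \<mapsto> diag(1, b) carry clean elements to clean elements, and
   diag(a - a^2, 0) is nilpotent only if a - a^2 is. *)

section \<open>Strongly nil-clean elements of a ring\<close>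

text \<open>Horner evaluation of integer polynomials; \<^const>\<open>poly\<close> needs a commutative ring.\<close>

definition eval_int_poly :: "int poly \<Rightarrow> 'a::ring_1 \<Rightarrow> 'a" where
  "eval_int_poly p x = fold_coeffs (\<lambda>c y. of_int c + x * y) p 0"

lemma eval_int_poly_0 [simp]: "eval_int_poly 0 x = 0"
  by (simp add: eval_int_poly_def)

lemma eval_int_poly_pCons [simp]: "eval_int_poly (pCons c p) x = of_int c + x * eval_int_poly p x"
  by (cases "p = 0 \<and> c = 0") (auto simp add: eval_int_poly_def)

lemma eval_int_poly_add [simp]: "eval_int_poly (p + q) x = eval_int_poly p x + eval_int_poly q x"
proof (induction p arbitrary: q)
  case (pCons c p)
  then show ?case
    by (cases q) (simp add: algebra_simps)
qed simp

lemma eval_int_poly_smult [simp]: "eval_int_poly (smult c p) x = of_int c * eval_int_poly p x"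
proof (induction p)
  case (pCons d p)
  have "x * (of_int c * eval_int_poly p x) = of_int c * (x * eval_int_poly p x)"
    by (metis mult.assoc mult_of_int_commute)
  with pCons show ?case
    by (simp add: distrib_left)
qed simp

lemma eval_int_poly_mult [simp]: "eval_int_poly (p * q) x = eval_int_poly p x * eval_int_poly q x"
  by (induction p) (simp_all add: algebra_simps)

lemma eval_int_poly_uminus [simp]: "eval_int_poly (- p) x = - eval_int_poly p x"
  by (induction p) simp_all

lemma eval_int_poly_diff [simp]: "eval_int_poly (p - q) x = eval_int_poly p x - eval_int_poly q x"
  using eval_int_poly_add[of p "- q" x] by simp

lemma eval_int_poly_1 [simp]: "eval_int_poly 1 x = 1"
  by (simp add: one_pCons)

lemma eval_int_poly_of_int [simp]: "eval_int_poly (of_int k) x = of_int k"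
  by (simp add: of_int_poly)

lemma eval_int_poly_numeral [simp]: "eval_int_poly (numeral k) x = numeral k"
  using eval_int_poly_of_int[of "numeral k" x] by simp

lemma eval_int_poly_power [simp]: "eval_int_poly (p ^ n) x = eval_int_poly p x ^ n"
  by (induction n) simp_all

lemma eval_int_poly_commute:
  "eval_int_poly p x * eval_int_poly q x = eval_int_poly q x * eval_int_poly p x"
  by (metis eval_int_poly_mult mult.commute)

lemma eval_int_poly_in_subring:
  assumes "\<And>a b. a \<in> S \<Longrightarrow> b \<in> S \<Longrightarrow> a + b \<in> S"
    and "\<And>a b. a \<in> S \<Longrightarrow> b \<in> S \<Longrightarrow> a * b \<in> S"
    and "\<And>a. a \<in> S \<Longrightarrow> - a \<in> S" and "1 \<in> S" and "x \<in> S"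
  shows "eval_int_poly p x \<in> S"
proof (induction p)
  case 0
  from assms(1,3,4) show ?case
    by (metis add.right_inverse eval_int_poly_0)
next
  case (pCons c p)
  have "of_int c \<in> S"
  proof (induction c rule: int_induct[where k = 0])
    case base
    from assms(1,3,4) show ?case
      by (metis add.right_inverse of_int_0)
  next
    case (step1 i)
    then show ?case
      using assms(1)[of "of_int i" 1] assms(4) by simp
  next
    case (step2 i)
    then show ?case
      using assms(1)[of "of_int i" "- 1"] assms(3,4) by simp
  qed
  with pCons assms show ?case
    by simp
qed

fun newton_idem :: "nat \<Rightarrow> int poly" where
  "newton_idem 0 = [:0, 1:]"
| "newton_idem (Suc j) =
     newton_idem j + (newton_idem j - newton_idem j * newton_idem j) * (2 * newton_idem j - 1)"

lemma newton_step_defect: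
  fixes f :: "'a::comm_ring_1"
  shows "(f + (f - f*f) * (2*f - 1)) - (f + (f - f*f) * (2*f - 1)) * (f + (f - f*f) * (2*f - 1))
       = (f - f*f)^2 * (3 + 4 * (f - f*f))"
  by (simp add: algebra_simps power2_eq_square)

lemma newton_idem_dvd:
  defines "t \<equiv> [:0, 1:] - [:0, 1:] * [:0, 1:]"
  shows "t ^ (2 ^ j) dvd newton_idem j - newton_idem j * newton_idem j
    \<and> t dvd newton_idem j - [:0, 1:]"
proof (induction j)
  case 0
  then show ?case
    by (simp add: t_def)
next
  case (Suc j)
  let ?f = "newton_idem j"
  from Suc have defect: "t ^ (2 ^ j) dvd ?f - ?f * ?f" and shift: "t dvd ?f - [:0, 1:]"
    by auto
  have "t ^ (2 ^ Suc j) = (t ^ (2 ^ j))\<^sup>2"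
    by (simp add: power_mult[symmetric] mult.commute)
  also have "\<dots> dvd (?f - ?f * ?f)\<^sup>2"
    using defect by (simp add: dvd_power_same)
  also have "\<dots> dvd (?f - ?f * ?f)\<^sup>2 * (3 + 4 * (?f - ?f * ?f))"
    by simp
  finally have "t ^ (2 ^ Suc j) dvd newton_idem (Suc j) - newton_idem (Suc j) * newton_idem (Suc j)"
    using newton_step_defect[of ?f] by simp
  moreover have "t dvd ?f - ?f * ?f"
    using dvd_trans[OF dvd_power[of "2 ^ j" t] defect] by simp
  then have "t dvd (?f - [:0, 1:]) + (?f - ?f * ?f) * (2 * ?f - 1)"
    using shift by simp
  then have "t dvd newton_idem (Suc j) - [:0, 1:]"
    by (simp add: algebra_simps)
  ultimately show ?case
    by simp
qed

lemma lift_idempotent: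
  fixes r :: "'a::ring_1"
  assumes "(r - r*r) ^ N = 0"
  shows "\<exists>p h. eval_int_poly p r * eval_int_poly p r = eval_int_poly p r
    \<and> eval_int_poly p r - r = (r - r*r) * h \<and> (r - eval_int_poly p r) ^ N = 0"
proof -
  let ?t = "[:0, 1:] - [:0, 1:] * [:0, 1:] :: int poly"
  obtain g where g: "newton_idem N - newton_idem N * newton_idem N = ?t ^ (2 ^ N) * g"
    using newton_idem_dvd[of N] by blast
  obtain h where h: "newton_idem N - [:0, 1:] = ?t * h"
    using newton_idem_dvd[of N] by blast
  have eval_t: "eval_int_poly ?t r = r - r*r"
    by (simp add: algebra_simps)
  have "(r - r*r) ^ (2 ^ N) = (r - r*r) ^ N * (r - r*r) ^ (2 ^ N - N)"
    by (simp add: less_imp_le flip: power_add)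
  then have "(r - r*r) ^ (2 ^ N) = 0"
    using assms by simp
  then have idem: "eval_int_poly (newton_idem N - newton_idem N * newton_idem N) r = 0"
    unfolding g eval_int_poly_mult eval_int_poly_power eval_t by simp
  have shift: "eval_int_poly (newton_idem N - [:0, 1:]) r = (r - r*r) * eval_int_poly h r"
    unfolding h eval_int_poly_mult eval_t ..
  have "[:0, 1:] - newton_idem N = (- h) * ?t"
    using h by (simp add: algebra_simps)
  then have "([:0, 1:] - newton_idem N) ^ N = (- h) ^ N * ?t ^ N"
    by (simp only: power_mult_distrib)
  then have "eval_int_poly (([:0, 1:] - newton_idem N) ^ N) r = eval_int_poly (- h) r ^ N * (r - r*r) ^ N"
    by (simp only: eval_int_poly_mult eval_int_poly_power eval_t)
  then have nil: "eval_int_poly (([:0, 1:] - newton_idem N) ^ N) r = 0"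
    using assms by simp
  from idem shift nil show ?thesis
    by (intro exI[of _ "newton_idem N"] exI[of _ "eval_int_poly h r"]) auto
qed

lemma funpow_mult_one [simp]: "((*) q ^^ k) (1::'a::monoid_mult) = q ^ k"
  by (induction k) auto

lemma power_mult_commuting:
  fixes x y :: "'a::monoid_mult"
  assumes "x * y = y * x"
  shows "(x * y) ^ n = x ^ n * y ^ n"
proof (induction n)
  case (Suc n)
  have "y * x ^ n = x ^ n * y"
    using power_commuting_commutes[OF assms] by simp
  then show ?case
    using Suc by (simp add: mult.assoc) (metis mult.assoc)
qed simp

lemma snc_op_iff_nilpotent_defect:
  fixes a :: "'a::ring_1"
  shows "snc_op 0 1 (+) (*) a \<longleftrightarrow> (\<exists>k. (a - a*a) ^ k = 0)"
proof
  assume "snc_op 0 1 (+) (*) a"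
  then obtain e q k where e: "e*e = e" and q: "q ^ k = 0" and eq: "e*q = q*e" and a: "a = e + q"
    unfolding snc_op_def idem_op_def nil_op_def by auto
  have "a - a*a = q * (1 - e - e - q)" and "q * (1 - e - e - q) = (1 - e - e - q) * q"
    unfolding a using e eq by (simp_all add: algebra_simps)
  then have "(a - a*a) ^ k = q ^ k * (1 - e - e - q) ^ k"
    using power_mult_commuting by metis
  with q show "\<exists>k. (a - a*a) ^ k = 0"
    by auto
next
  assume "\<exists>k. (a - a*a) ^ k = 0"
  then obtain k p where idem: "eval_int_poly p a * eval_int_poly p a = eval_int_poly p a"
    and nil: "(a - eval_int_poly p a) ^ k = 0"
    using lift_idempotent by blast
  have "eval_int_poly p a * a = a * eval_int_poly p a"
    using eval_int_poly_commute[of p a "[:0, 1:]"] by simp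
  then have comm: "eval_int_poly p a * (a - eval_int_poly p a) = (a - eval_int_poly p a) * eval_int_poly p a"
    by (simp add: algebra_simps)
  show "snc_op 0 1 (+) (*) a"
    unfolding snc_op_def idem_op_def nil_op_def
    by (rule exI[of _ "eval_int_poly p a"], rule exI[of _ "a - eval_int_poly p a"])
      (use idem nil comm in auto)
qed

lemma unit_op_one_minus_nilpotent:
  fixes s :: "'a::ring_1"
  assumes "s ^ k = 0"
  shows "unit_op 1 (*) (1 - s)"
proof -
  have left: "(1 - s) * (\<Sum>i<n. s ^ i) = 1 - s ^ n" for n
  proof (induction n)
    case (Suc n)
    have "(1 - s) * (\<Sum>i<Suc n. s ^ i) = (1 - s) * (\<Sum>i<n. s ^ i) + (1 - s) * s ^ n"
      by (simp add: distrib_left)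
    with Suc show ?case
      by (simp add: algebra_simps)
  qed simp
  have right: "(\<Sum>i<n. s ^ i) * (1 - s) = 1 - s ^ n" for n
  proof (induction n)
    case (Suc n)
    have "(\<Sum>i<Suc n. s ^ i) * (1 - s) = (\<Sum>i<n. s ^ i) * (1 - s) + s ^ n * (1 - s)"
      by (simp add: distrib_right)
    with Suc show ?case
      by (simp add: algebra_simps power_commutes)
  qed simp
  show ?thesis
    unfolding unit_op_def using left[of k] right[of k] assms by auto
qed

lemma unit_op_if_inverse_modulo_nilpotent:
  fixes x :: "'a::ring_1"
  assumes "x * y = 1 - s" "y' * x = 1 - s'" "s ^ k = 0" "s' ^ k' = 0"
  shows "unit_op 1 (*) x"
proof -
  obtain w where w: "(1 - s) * w = 1"
    using unit_op_one_minus_nilpotent[OF assms(3)] unfolding unit_op_def by blast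
  obtain w' where w': "w' * (1 - s') = 1"
    using unit_op_one_minus_nilpotent[OF assms(4)] unfolding unit_op_def by blast
  have right: "x * (y * w) = 1"
    using assms(1) w by (simp flip: mult.assoc)
  have left: "(w' * y') * x = 1"
    using assms(2) w' by (simp add: mult.assoc)
  have "w' * y' = (w' * y') * (x * (y * w))"
    using right by simp
  also have "\<dots> = y * w"
    using left by (simp flip: mult.assoc)
  finally show ?thesis
    unfolding unit_op_def using right left by metis
qed

section \<open>Rings of additive endomorphisms\<close>

text \<open>The factor \<^typ>\<open>'a\<close> only makes the group nontrivial, as \<^class>\<open>ring_1\<close> demands \<open>0 \<noteq> 1\<close>.\<close>

typedef (overloaded) ('a, 'g) add_endo =
  "{f :: 'a::ring_1 \<times> 'g::ab_group_add \<Rightarrow> 'a \<times> 'g. \<forall>x y. f (x + y) = f x + f y}"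
  morphisms apply_endo Abs_add_endo
  by (rule exI[of _ id]) simp

setup_lifting type_definition_add_endo

instantiation add_endo :: (ring_1, ab_group_add) ring_1
begin

lift_definition zero_add_endo :: "('a, 'b) add_endo" is "\<lambda>_::'a \<times> 'b. 0::'a \<times> 'b"
  by simp

lift_definition one_add_endo :: "('a, 'b) add_endo" is "id :: 'a \<times> 'b \<Rightarrow> 'a \<times> 'b"
  by simp

lift_definition plus_add_endo :: "('a, 'b) add_endo \<Rightarrow> ('a, 'b) add_endo \<Rightarrow> ('a, 'b) add_endo"
  is "\<lambda>f g (x::'a \<times> 'b). f x + g x :: 'a \<times> 'b"
  by (simp add: algebra_simps)

lift_definition uminus_add_endo :: "('a, 'b) add_endo \<Rightarrow> ('a, 'b) add_endo"
  is "\<lambda>f (x::'a \<times> 'b). - f x :: 'a \<times> 'b"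
  by simp

lift_definition minus_add_endo :: "('a, 'b) add_endo \<Rightarrow> ('a, 'b) add_endo \<Rightarrow> ('a, 'b) add_endo"
  is "\<lambda>f g (x::'a \<times> 'b). f x - g x :: 'a \<times> 'b"
  by (simp add: algebra_simps)

lift_definition times_add_endo :: "('a, 'b) add_endo \<Rightarrow> ('a, 'b) add_endo \<Rightarrow> ('a, 'b) add_endo"
  is "(\<circ>) :: ('a \<times> 'b \<Rightarrow> 'a \<times> 'b) \<Rightarrow> _"
  by simp

instance
proof
  fix f g h :: "('a, 'b) add_endo"
  show "f * g * h = f * (g * h)" by transfer auto
  show "1 * f = f" by transfer auto
  show "f * 1 = f" by transfer auto
  show "f + g + h = f + (g + h)" by transfer (simp add: algebra_simps)
  show "f + g = g + f" by transfer (simp add: algebra_simps)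
  show "0 + f = f" by transfer simp
  show "- f + f = 0" by transfer simp
  show "f - g = f + - g" by transfer simp
  show "(f + g) * h = f * h + g * h" by transfer (simp add: comp_def)
  show "f * (g + h) = f * g + f * h" by transfer (auto simp only: comp_def)
  show "(0::('a, 'b) add_endo) \<noteq> 1"
  proof transfer
    show "(\<lambda>_. 0::'a \<times> 'b) \<noteq> id"
    proof
      assume "(\<lambda>_. 0::'a \<times> 'b) = id"
      then have "(0::'a \<times> 'b) = (1, 0)"
        by (metis id_apply)
      then show False
        by (simp add: zero_prod_def)
    qed
  qed
qed

end

lemma prod_list_eq_0_if_long:
  assumes "\<forall>xs. length xs = k \<and> set xs \<subseteq> T \<longrightarrow> prod_list xs = (0::'a::ring_1)"
    and "set ys \<subseteq> T" and "k \<le> length ys"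
  shows "prod_list ys = 0"
proof -
  have "prod_list (take k ys) = 0"
    using assms set_take_subset[of k ys] by auto
  then show ?thesis
    by (metis append_take_drop_id prod_list.append mult_zero_left)
qed

lemma nilpotent_ideal_power_eq_0:
  assumes "nilpotent_ideal T"
  shows "\<exists>N. \<forall>t\<in>T. t ^ N = 0"
proof -
  obtain k where k: "\<forall>xs. length xs = k \<and> set xs \<subseteq> T \<longrightarrow> prod_list xs = 0"
    using assms unfolding nilpotent_ideal_def by blast
  have "t ^ k = 0" if "t \<in> T" for t
  proof -
    have "set (replicate k t) \<subseteq> T"
      using that by (cases k) auto
    then show ?thesis
      using k[rule_format, of "replicate k t"] by (simp add: prod_list_replicate)
  qed
  then show ?thesis
    by blast
qed

definition ann_level :: "'a::ring_1 set \<Rightarrow> nat \<Rightarrow> nat \<Rightarrow> 'a \<Rightarrow> bool" where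
  "ann_level T k j z \<longleftrightarrow> (\<forall>ys. set ys \<subseteq> T \<and> k \<le> length ys + j \<longrightarrow> z * prod_list ys = 0)"

lemma ann_level_0:
  assumes "\<forall>xs. length xs = k \<and> set xs \<subseteq> T \<longrightarrow> prod_list xs = 0"
  shows "ann_level T k 0 z"
  unfolding ann_level_def using prod_list_eq_0_if_long[OF assms] by simp

lemma ann_level_zero [simp]: "ann_level T k j 0"
  by (simp add: ann_level_def)

lemma ann_level_add: "ann_level T k j x \<Longrightarrow> ann_level T k j y \<Longrightarrow> ann_level T k j (x + y)"
  by (simp add: ann_level_def distrib_right)

lemma ann_level_sum:
  "(\<And>i. i < (n::nat) \<Longrightarrow> ann_level T k j (f i)) \<Longrightarrow> ann_level T k j (\<Sum>i<n. f i)"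
  by (induction n) (simp_all add: ann_level_add)

lemma ann_level_mult:
  assumes "ann_level T k j z" and "t \<in> T"
  shows "ann_level T k (Suc j) (z * t)"
  unfolding ann_level_def
proof (intro allI impI)
  fix ys
  assume "set ys \<subseteq> T \<and> k \<le> length ys + Suc j"
  with assms(2) have "set (t # ys) \<subseteq> T \<and> k \<le> length (t # ys) + j"
    by simp
  with assms(1) have "z * prod_list (t # ys) = 0"
    unfolding ann_level_def by blast
  then show "z * t * prod_list ys = 0"
    by (simp add: mult.assoc)
qed

lemma ann_level_mono: "ann_level T k j z \<Longrightarrow> i \<le> j \<Longrightarrow> ann_level T k i z"
  unfolding ann_level_def by (meson add_le_mono le_refl le_trans)

lemma ann_level_top: "ann_level T k k z \<Longrightarrow> z = 0"
  unfolding ann_level_def by (metis empty_subsetI list.set(1) list.size(3) order.refl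
      plus_nat.add_0 prod_list.Nil mult_1_right)

section \<open>Trace ideals\<close>

lemma phi_in_trace_ideal: "phi m n \<in> trace_ideal phi"
  unfolding trace_ideal_def by (rule CollectI, rule exI[of _ 1]) auto

lemma zero_in_trace_ideal: "0 \<in> trace_ideal phi"
  unfolding trace_ideal_def by (rule CollectI, rule exI[of _ 0]) simp

lemma trace_ideal_iff:
  "x \<in> trace_ideal phi \<longleftrightarrow> (\<exists>(k::nat) ms ns. x = (\<Sum>i<k. phi (ms i) (ns i)))"
  by (auto simp: trace_ideal_def)

lemma trace_ideal_add_phi: "x \<in> trace_ideal phi \<Longrightarrow> x + phi m n \<in> trace_ideal phi"
proof -
  assume "x \<in> trace_ideal phi"
  then obtain k :: nat and ms ns where x: "x = (\<Sum>i<k. phi (ms i) (ns i))"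
    unfolding trace_ideal_iff by blast
  have "x + phi m n = (\<Sum>i<Suc k. phi ((ms(k := m)) i) ((ns(k := n)) i))"
    unfolding x by simp
  then show ?thesis
    unfolding trace_ideal_iff by blast
qed

lemma trace_ideal_add:
  assumes "x \<in> trace_ideal phi" and "y \<in> trace_ideal phi"
  shows "x + y \<in> trace_ideal phi"
proof -
  obtain k :: nat and ms ns where y: "y = (\<Sum>i<k. phi (ms i) (ns i))"
    using assms(2) unfolding trace_ideal_iff by blast
  have "x + (\<Sum>i<l. phi (ms i) (ns i)) \<in> trace_ideal phi" for l
    by (induction l) (simp_all add: assms(1) trace_ideal_add_phi flip: add.assoc)
  then show ?thesis
    using y by simp
qed

context
  fixes lM :: "'a::ring_1 \<Rightarrow> 'm::ab_group_add \<Rightarrow> 'm" and rM :: "'m \<Rightarrow> 'b::ring_1 \<Rightarrow> 'm"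
    and lN :: "'b \<Rightarrow> 'n::ab_group_add \<Rightarrow> 'n" and rN :: "'n \<Rightarrow> 'a \<Rightarrow> 'n"
    and phi :: "'m \<Rightarrow> 'n \<Rightarrow> 'a"
  assumes pairing: "pairing lM rM lN rN phi"
begin

lemma trace_ideal_uminus:
  assumes "x \<in> trace_ideal phi"
  shows "- x \<in> trace_ideal phi"
proof -
  obtain k :: nat and ms ns where x: "x = (\<Sum>i<k. phi (ms i) (ns i))"
    using assms unfolding trace_ideal_iff by blast
  have "additive (\<lambda>m. phi m n)" for n
    using pairing unfolding pairing_def additive_def by blast
  then have "phi (- m) n = - phi m n" for m n
    using additive.minus by fastforce
  then have "- x = (\<Sum>i<k. phi (- ms i) (ns i))"
    unfolding x by (simp add: sum_negf)
  then show ?thesis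
    unfolding trace_ideal_iff by (intro exI[of _ k] exI[of _ "\<lambda>i. - ms i"] exI[of _ ns])
qed

lemma trace_ideal_diff:
  "x \<in> trace_ideal phi \<Longrightarrow> y \<in> trace_ideal phi \<Longrightarrow> x - y \<in> trace_ideal phi"
  using trace_ideal_add[of x phi "- y"] trace_ideal_uminus[of y] by simp

lemma trace_ideal_mult_left:
  assumes "x \<in> trace_ideal phi"
  shows "z * x \<in> trace_ideal phi"
proof -
  obtain k :: nat and ms ns where x: "x = (\<Sum>i<k. phi (ms i) (ns i))"
    using assms unfolding trace_ideal_iff by blast
  have "z * x = (\<Sum>i<k. phi (lM z (ms i)) (ns i))"
    using pairing unfolding x pairing_def by (simp add: sum_distrib_left)
  then show ?thesis
    unfolding trace_ideal_iff by (intro exI[of _ k] exI[of _ "\<lambda>i. lM z (ms i)"] exI[of _ ns])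
qed

lemma trace_ideal_mult_right:
  assumes "x \<in> trace_ideal phi"
  shows "x * z \<in> trace_ideal phi"
proof -
  obtain k :: nat and ms ns where x: "x = (\<Sum>i<k. phi (ms i) (ns i))"
    using assms unfolding trace_ideal_iff by blast
  have "x * z = (\<Sum>i<k. phi (ms i) (rN (ns i) z))"
    using pairing unfolding x pairing_def by (simp add: sum_distrib_right)
  then show ?thesis
    unfolding trace_ideal_iff by (intro exI[of _ k] exI[of _ ms] exI[of _ "\<lambda>i. rN (ns i) z"])
qed

lemma power_diff_in_trace_ideal:
  assumes "s \<in> trace_ideal phi"
  shows "(c - s) ^ r - c ^ r \<in> trace_ideal phi"
proof (induction r)
  case 0
  then show ?case
    by (simp add: zero_in_trace_ideal)
next
  case (Suc r)
  have "(c - s) ^ Suc r - c ^ Suc r = c * ((c - s) ^ r - c ^ r) - s * (c - s) ^ r"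
    by (simp add: algebra_simps)
  then show ?case
    using trace_ideal_diff[OF trace_ideal_mult_left[OF Suc] trace_ideal_mult_right[OF assms]] by simp
qed

end

section \<open>The Morita context ring\<close>

lemma morita_add_eq_plus [simp]: "morita_add X Y = X + Y"
  by (cases X; cases Y) (simp add: morita_add_def)

lemma morita_zero_eq_0 [simp]: "morita_zero = 0"
  by (simp add: morita_zero_def zero_prod_def)

definition morita_flip :: "'a \<times> 'm \<times> 'n \<times> 'b \<Rightarrow> 'b \<times> 'n \<times> 'm \<times> 'a" where
  "morita_flip X = (case X of (a, m, n, b) \<Rightarrow> (b, n, m, a))"

lemma morita_flip_simp [simp]: "morita_flip (a, m, n, b) = (b, n, m, a)"
  by (simp add: morita_flip_def)

lemma morita_flip_flip [simp]: "morita_flip (morita_flip X) = X"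
  by (cases X) simp

lemma morita_flip_add: "morita_flip (X + Y) = morita_flip X + morita_flip Y"
  by (cases X; cases Y) simp

lemma morita_flip_diff: "morita_flip (X - Y) = morita_flip X - morita_flip Y"
  by (cases X; cases Y) simp

lemma morita_flip_one [simp]: "morita_flip morita_one = morita_one"
  by (simp add: morita_one_def)

lemma morita_flip_eq_0_iff [simp]: "morita_flip X = 0 \<longleftrightarrow> X = 0"
  by (cases X) (auto simp: zero_prod_def)

locale morita_ring =
  fixes lM :: "'a::ring_1 \<Rightarrow> 'm::ab_group_add \<Rightarrow> 'm"
    and rM :: "'m \<Rightarrow> 'b::ring_1 \<Rightarrow> 'm"
    and lN :: "'b \<Rightarrow> 'n::ab_group_add \<Rightarrow> 'n"
    and rN :: "'n \<Rightarrow> 'a \<Rightarrow> 'n"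
    and phi :: "'m \<Rightarrow> 'n \<Rightarrow> 'a"
    and psi :: "'n \<Rightarrow> 'm \<Rightarrow> 'b"
  assumes morita_context: "morita_context lM rM lN rN phi psi"
begin

lemma pairing_phi: "pairing lM rM lN rN phi"
  using morita_context unfolding morita_context_def by auto

lemma morita_laws [simp]:
  "lM a (m + m') = lM a m + lM a m'" "lM (a + a') m = lM a m + lM a' m"
  "lM (a * a') m = lM a (lM a' m)" "lM 1 m = m"
  "rM (m + m') b = rM m b + rM m' b" "rM m (b + b') = rM m b + rM m b'"
  "rM (rM m b) b' = rM m (b * b')" "rM m 1 = m" "lM a (rM m b) = rM (lM a m) b"
  "lN b (n + n') = lN b n + lN b n'" "lN (b + b') n = lN b n + lN b' n"
  "lN (b * b') n = lN b (lN b' n)" "lN 1 n = n"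
  "rN (n + n') a = rN n a + rN n' a" "rN n (a + a') = rN n a + rN n a'"
  "rN (rN n a) a' = rN n (a * a')" "rN n 1 = n" "lN b (rN n a) = rN (lN b n) a"
  "phi (m + m') n = phi m n + phi m' n" "phi m (n + n') = phi m n + phi m n'"
  "phi (rM m b) n = phi m (lN b n)" "phi (lM a m) n = a * phi m n" "phi m (rN n a) = phi m n * a"
  "psi (n + n') m = psi n m + psi n' m" "psi n (m + m') = psi n m + psi n m'"
  "psi (rN n a) m = psi n (lM a m)" "psi (lN b n) m = b * psi n m" "psi n (rM m b) = psi n m * b"
  "lM (phi m n) m' = rM m (psi n m')" "lN (psi n m) n' = rN n (phi m n')"
  using morita_context unfolding morita_context_def bimodule_def pairing_def by auto

lemma additive_actions:
  "additive (lM a)" "additive (\<lambda>a. lM a m)" "additive (\<lambda>m. rM m b)" "additive (rM m)"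
  "additive (lN b)" "additive (\<lambda>b. lN b n)" "additive (\<lambda>n. rN n a)" "additive (rN n)"
  "additive (\<lambda>m. phi m n)" "additive (phi m)" "additive (\<lambda>n. psi n m)" "additive (psi n)"
  by (simp_all add: additive_def)

lemmas additive_actions_zero [simp] = additive_actions[THEN additive.zero]

abbreviation mul where "mul \<equiv> morita_mult lM rM lN rN phi psi"

abbreviation pow where "pow X k \<equiv> (mul X ^^ k) morita_one"

lemma mul_simp [simp]: "mul (a, m, n, b) (a', m', n', b') =
    (a * a' + phi m n', lM a m' + rM m b', rN n a' + lN b n', psi n m' + b * b')"
  by (simp add: morita_mult_def)

lemma mul_assoc: "mul (mul X Y) Z = mul X (mul Y Z)"
  by (cases X; cases Y; cases Z) (simp add: algebra_simps)

lemma mul_add_right: "mul X (Y + Z) = mul X Y + mul X Z"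
  by (cases X; cases Y; cases Z) (simp add: algebra_simps)

lemma mul_add_left: "mul (X + Y) Z = mul X Z + mul Y Z"
  by (cases X; cases Y; cases Z) (simp add: algebra_simps)

lemma mul_one_left: "mul morita_one X = X"
  by (cases X) (simp add: morita_one_def)

lemma mul_one_right: "mul X morita_one = X"
  by (cases X) (simp add: morita_one_def)

text \<open>The left regular representation embeds the Morita ring into a type-class ring.\<close>

definition regular :: "'a \<times> 'm \<times> 'n \<times> 'b \<Rightarrow> ('a, 'm \<times> 'n \<times> 'b) add_endo" where
  "regular X = Abs_add_endo (mul X)"

lemma apply_regular: "apply_endo (regular X) = mul X"
  unfolding regular_def by (rule Abs_add_endo_inverse, rule CollectI, intro allI, rule mul_add_right)

lemma regular_mult: "regular (mul X Y) = regular X * regular Y"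
  by (simp add: apply_endo_inject[symmetric] times_add_endo.rep_eq apply_regular fun_eq_iff mul_assoc)

lemma regular_add: "regular (X + Y) = regular X + regular Y"
  by (simp add: apply_endo_inject[symmetric] plus_add_endo.rep_eq apply_regular fun_eq_iff mul_add_left)

lemma regular_one: "regular morita_one = 1"
  by (simp add: apply_endo_inject[symmetric] one_add_endo.rep_eq apply_regular fun_eq_iff mul_one_left)

lemma regular_inject: "regular X = regular Y \<longleftrightarrow> X = Y"
  by (metis apply_regular mul_one_right)

lemma additive_regular: "additive regular"
  by (simp add: additive_def regular_add)

lemmas regular_zero = additive.zero[OF additive_regular]
lemmas regular_diff = additive.diff[OF additive_regular]
lemmas regular_uminus = additive.minus[OF additive_regular]

lemma regular_pow: "regular (pow X k) = regular X ^ k"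
  by (induction k) (simp_all add: regular_one regular_mult)

lemma pow_eq_0_iff: "pow X k = 0 \<longleftrightarrow> regular X ^ k = 0"
  by (metis regular_inject regular_pow regular_zero)

lemma pow_Suc_right: "pow X (Suc k) = mul (pow X k) X"
  by (simp add: regular_inject[symmetric] regular_pow regular_mult power_Suc2 power_commutes del: funpow.simps)

lemma pow_mult: "pow X (r * s) = pow (pow X r) s"
  by (simp add: regular_inject[symmetric] regular_pow power_mult)

lemma eval_int_poly_regular: "eval_int_poly p (regular X) \<in> range regular"
  by (rule eval_int_poly_in_subring)
    (auto simp flip: regular_add regular_mult regular_uminus regular_one)

lemma snc_op_iff_nilpotent_defect_morita:
  "snc_op morita_zero morita_one morita_add mul X \<longleftrightarrow> (\<exists>k. pow (X - mul X X) k = 0)"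
proof
  assume "snc_op morita_zero morita_one morita_add mul X"
  then obtain E Q k where decomp: "mul E E = E" "pow Q k = 0" "mul E Q = mul Q E" "X = E + Q"
    unfolding snc_op_def idem_op_def nil_op_def by auto
  have "snc_op 0 1 (+) (*) (regular X)"
    unfolding snc_op_def idem_op_def nil_op_def funpow_mult_one
    by (rule exI[of _ "regular E"], rule exI[of _ "regular Q"])
      (use decomp in \<open>auto simp flip: regular_mult regular_add simp: pow_eq_0_iff\<close>)
  then show "\<exists>k. pow (X - mul X X) k = 0"
    unfolding snc_op_iff_nilpotent_defect pow_eq_0_iff regular_diff regular_mult .
next
  let ?x = "regular X"
  assume "\<exists>k. pow (X - mul X X) k = 0"
  then obtain k where "(?x - ?x * ?x) ^ k = 0"
    unfolding pow_eq_0_iff regular_diff regular_mult by blast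
  then obtain p where idem: "eval_int_poly p ?x * eval_int_poly p ?x = eval_int_poly p ?x"
    and nil: "(?x - eval_int_poly p ?x) ^ k = 0"
    using lift_idempotent by blast
  obtain E where E: "eval_int_poly p ?x = regular E"
    using eval_int_poly_regular by blast
  have "eval_int_poly p ?x * ?x = ?x * eval_int_poly p ?x"
    using eval_int_poly_commute[of p ?x "[:0, 1:]"] by simp
  then have comm: "eval_int_poly p ?x * (?x - eval_int_poly p ?x) = (?x - eval_int_poly p ?x) * eval_int_poly p ?x"
    by (simp add: algebra_simps)
  show "snc_op morita_zero morita_one morita_add mul X"
    unfolding snc_op_def idem_op_def nil_op_def
    by (rule exI[of _ E], rule exI[of _ "X - E"])
      (use idem nil comm in \<open>auto simp add: E regular_inject[symmetric] regular_pow regular_zero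
          regular_mult regular_diff\<close>)
qed

lemma pow_diagonal: "pow (c, 0, 0, d) k = (c ^ k, 0, 0, d ^ k)"
  by (induction k) (simp_all add: morita_one_def)

lemma CSNC_if_morita_CSNC:
  assumes "morita_CSNC lM rM lN rN phi psi"
  shows "CSNC TYPE('a)"
  unfolding CSNC_def CSNC_op_def
proof (intro allI impI)
  fix a :: 'a
  assume "clean_op 1 (+) (*) a"
  then obtain e u v where e: "e * e = e" and uv: "u * v = 1" "v * u = 1" and a: "a = e + u"
    unfolding clean_op_def idem_op_def unit_op_def by blast
  have "mul (e, 0, 0, 0) (e, 0, 0, 0) = (e, 0, 0, 0)"
    and "mul (u, 0, 0, 1) (v, 0, 0, 1) = morita_one" "mul (v, 0, 0, 1) (u, 0, 0, 1) = morita_one"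
    and "(a, 0, 0, 1) = morita_add (e, 0, 0, 0) (u, 0, 0, 1)"
    using e uv a by (simp_all add: morita_one_def)
  then have "clean_op morita_one morita_add mul (a, 0, 0, 1)"
    unfolding clean_op_def idem_op_def unit_op_def by blast
  with assms obtain k where "pow ((a, 0, 0, 1) - mul (a, 0, 0, 1) (a, 0, 0, 1)) k = 0"
    unfolding morita_CSNC_def CSNC_op_def snc_op_iff_nilpotent_defect_morita by blast
  then have "(a - a * a) ^ k = 0"
    by (simp add: pow_diagonal zero_prod_def)
  then show "snc_op 0 1 (+) (*) a"
    using snc_op_iff_nilpotent_defect by blast
qed

lemma morita_ring_flipped: "morita_ring lN rN lM rM psi phi"
  using morita_context unfolding morita_ring_def morita_context_def by auto

lemma flip_mul: "morita_flip (mul X Y) = morita_mult lN rN lM rM psi phi (morita_flip X) (morita_flip Y)"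
  by (cases X; cases Y) (simp add: morita_mult_def add.commute)

lemma flip_pow: "morita_flip (pow X k) = (morita_mult lN rN lM rM psi phi (morita_flip X) ^^ k) morita_one"
  by (induction k) (simp_all add: flip_mul)

lemma clean_op_flip:
  assumes "clean_op morita_one morita_add mul X"
  shows "clean_op morita_one morita_add (morita_mult lN rN lM rM psi phi) (morita_flip X)"
proof -
  obtain E U V where "mul E E = E" "mul U V = morita_one" "mul V U = morita_one" "X = E + U"
    using assms unfolding clean_op_def idem_op_def unit_op_def by auto
  then show ?thesis
    unfolding clean_op_def idem_op_def unit_op_def
    by (metis flip_mul morita_flip_one morita_flip_add morita_add_eq_plus)
qed

lemma snc_op_flip:
  assumes "snc_op morita_zero morita_one morita_add mul X"
  shows "snc_op morita_zero morita_one morita_add (morita_mult lN rN lM rM psi phi) (morita_flip X)"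
proof -
  obtain E Q k where "mul E E = E" "pow Q k = 0" "mul E Q = mul Q E" "X = E + Q"
    using assms unfolding snc_op_def idem_op_def nil_op_def by auto
  then show ?thesis
    unfolding snc_op_def idem_op_def nil_op_def
    by (metis flip_mul flip_pow morita_flip_add morita_add_eq_plus morita_zero_eq_0 morita_flip_eq_0_iff)
qed

lemma morita_CSNC_flip:
  assumes "morita_CSNC lM rM lN rN phi psi"
  shows "morita_CSNC lN rN lM rM psi phi"
  unfolding morita_CSNC_def CSNC_op_def
proof (intro allI impI)
  interpret flipped: morita_ring lN rN lM rM psi phi
    by (rule morita_ring_flipped)
  fix X
  assume "clean_op morita_one morita_add (morita_mult lN rN lM rM psi phi) X"
  then have "clean_op morita_one morita_add mul (morita_flip X)"
    by (rule flipped.clean_op_flip)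
  with assms have "snc_op morita_zero morita_one morita_add mul (morita_flip X)"
    unfolding morita_CSNC_def CSNC_op_def by blast
  then show "snc_op morita_zero morita_one morita_add (morita_mult lN rN lM rM psi phi) X"
    using snc_op_flip by fastforce
qed

text \<open>In the powers of \<open>(x, m, n, y)\<close> every return to the corner \<open>A\<close> (through \<open>x\<close>, or
  through \<open>m\<close> and then \<open>n\<close>) contributes a factor from \<open>MN\<close>, so the top row gains
  one \<open>MN\<close>-factor every two steps.\<close>

lemma pow_top_row_levels:
  assumes nil: "\<forall>xs. length xs = k \<and> set xs \<subseteq> trace_ideal phi \<longrightarrow> prod_list xs = 0"
    and x: "x \<in> trace_ideal phi" and y: "y \<in> trace_ideal psi"
  shows "ann_level (trace_ideal phi) k (r div 2) (fst (pow (x, m, n, y) r))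
    \<and> (\<forall>n'. ann_level (trace_ideal phi) k ((r + 1) div 2) (phi (fst (snd (pow (x, m, n, y) r))) n'))"
proof (induction r)
  case 0
  then show ?case
    by (simp add: ann_level_0[OF nil] morita_one_def)
next
  case (Suc r)
  obtain \<alpha> \<mu> \<nu> \<beta> where P: "pow (x, m, n, y) r = (\<alpha>, \<mu>, \<nu>, \<beta>)"
    by (cases "pow (x, m, n, y) r")
  from Suc P have \<alpha>: "ann_level (trace_ideal phi) k (r div 2) \<alpha>"
    and \<mu>: "\<And>n'. ann_level (trace_ideal phi) k ((r + 1) div 2) (phi \<mu> n')"
    by auto
  obtain l :: nat and ms ns where y_sum: "y = (\<Sum>i<l. psi (ns i) (ms i))"
    using y unfolding trace_ideal_iff by blast
  have "lN y n' = (\<Sum>i<l. rN (ns i) (phi (ms i) n'))" for n'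
    unfolding y_sum using additive.sum[OF additive_actions(6), of _ "{..<l}" n'] by simp
  then have "phi \<mu> (lN y n') = (\<Sum>i<l. phi \<mu> (rN (ns i) (phi (ms i) n')))" for n'
    by (simp add: additive.sum[OF additive_actions(10)])
  then have phi_y: "phi \<mu> (lN y n') = (\<Sum>i<l. phi \<mu> (ns i) * phi (ms i) n')" for n'
    by simp
  have "ann_level (trace_ideal phi) k (Suc r div 2) (\<alpha> * x + phi \<mu> n)"
  proof (rule ann_level_add)
    show "ann_level (trace_ideal phi) k (Suc r div 2) (\<alpha> * x)"
      using ann_level_mult[OF \<alpha> x] by (rule ann_level_mono) presburger
  qed (use \<mu> in simp)
  moreover have "ann_level (trace_ideal phi) k ((Suc r + 1) div 2) (phi (lM \<alpha> m + rM \<mu> y) n')" for n'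
    unfolding morita_laws phi_y
  proof (rule ann_level_add)
    show "ann_level (trace_ideal phi) k ((Suc r + 1) div 2) (\<alpha> * phi m n')"
      using ann_level_mult[OF \<alpha> phi_in_trace_ideal] by (rule ann_level_mono) presburger
    show "ann_level (trace_ideal phi) k ((Suc r + 1) div 2) (\<Sum>i<l. phi \<mu> (ns i) * phi (ms i) n')"
      by (rule ann_level_sum, rule ann_level_mono[OF ann_level_mult[OF \<mu> phi_in_trace_ideal]]) presburger
  qed
  ultimately show ?case
    by (simp add: pow_Suc_right P del: funpow.simps)
qed

lemma pow_top_row_eq_0:
  assumes nil: "\<forall>xs. length xs = k \<and> set xs \<subseteq> trace_ideal phi \<longrightarrow> prod_list xs = 0"
    and x: "x \<in> trace_ideal phi" and y: "y \<in> trace_ideal psi"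
    and r: "2 * k < r"
  shows "fst (pow (x, m, n, y) r) = 0 \<and> fst (snd (pow (x, m, n, y) r)) = 0"
proof -
  have vanish: "fst (pow (x, m, n, y) r') = 0 \<and> phi (fst (snd (pow (x, m, n, y) r'))) n' = 0"
    if "2 * k \<le> r'" for r' n'
  proof -
    have "k \<le> r' div 2" and "k \<le> (r' + 1) div 2"
      using that by presburger+
    then show ?thesis
      using pow_top_row_levels[OF nil x y, of r'] ann_level_mono ann_level_top by blast
  qed
  obtain r' where r': "r = Suc r'" "2 * k \<le> r'"
    using r by (cases r) auto
  obtain \<alpha> \<mu> \<nu> \<beta> where P: "pow (x, m, n, y) r' = (\<alpha>, \<mu>, \<nu>, \<beta>)"
    by (cases "pow (x, m, n, y) r'")
  obtain l :: nat and ms ns where y_sum: "y = (\<Sum>i<l. psi (ns i) (ms i))"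
    using y unfolding trace_ideal_iff by blast
  have "rM \<mu> y = (\<Sum>i<l. lM (phi \<mu> (ns i)) (ms i))"
    unfolding y_sum by (simp add: additive.sum[OF additive_actions(4)])
  also have "\<dots> = 0"
    using vanish[OF r'(2)] P by simp
  finally have "lM \<alpha> m + rM \<mu> y = 0"
    using vanish[OF r'(2)] P by simp
  with vanish[OF order.trans[OF r'(2) le_SucI[OF order.refl]]] show ?thesis
    by (simp add: r'(1) pow_Suc_right P del: funpow.simps)
qed

lemma pow_eq_0_if_diagonal_in_trace_ideals:
  assumes "nilpotent_ideal (trace_ideal phi)" and "nilpotent_ideal (trace_ideal psi)"
    and "x \<in> trace_ideal phi" and "y \<in> trace_ideal psi"
  shows "\<exists>r. pow (x, m, n, y) r = 0"
proof -
  interpret flipped: morita_ring lN rN lM rM psi phi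
    by (rule morita_ring_flipped)
  obtain kA where kA: "\<forall>xs. length xs = kA \<and> set xs \<subseteq> trace_ideal phi \<longrightarrow> prod_list xs = 0"
    using assms(1) unfolding nilpotent_ideal_def by blast
  obtain kB where kB: "\<forall>xs. length xs = kB \<and> set xs \<subseteq> trace_ideal psi \<longrightarrow> prod_list xs = 0"
    using assms(2) unfolding nilpotent_ideal_def by blast
  define r where "r = Suc (2 * kA + 2 * kB)"
  then have "2 * kA < r" and "2 * kB < r"
    by simp_all
  obtain a' m' n' b' where P: "pow (x, m, n, y) r = (a', m', n', b')"
    by (cases "pow (x, m, n, y) r")
  have "a' = 0 \<and> m' = 0"
    using pow_top_row_eq_0[OF kA assms(3,4) \<open>2 * kA < r\<close>, where m = m and n = n] P by simp
  moreover have "b' = 0 \<and> n' = 0"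
    using flipped.pow_top_row_eq_0[OF kB assms(4,3) \<open>2 * kB < r\<close>, where m = n and n = m]
      flip_pow[where X = "(x, m, n, y)" and k = r, symmetric] P
    by simp
  ultimately show ?thesis
    using P by (auto simp: zero_prod_def)
qed

lemma clean_op_corner:
  assumes nil: "nilpotent_ideal (trace_ideal phi)"
    and clean: "clean_op morita_one morita_add mul X"
  shows "clean_op 1 (+) (*) (fst X)"
proof -
  obtain E U V where E: "mul E E = E" and UV: "mul U V = morita_one" "mul V U = morita_one"
    and X: "X = E + U"
    using clean unfolding clean_op_def idem_op_def unit_op_def by auto
  obtain e em en eb where E_eq: "E = (e, em, en, eb)"
    by (cases E)
  obtain u um un ub where U_eq: "U = (u, um, un, ub)"
    by (cases U)
  obtain v vm vn vb where V_eq: "V = (v, vm, vn, vb)"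
    by (cases V)
  obtain N where N: "\<forall>t\<in>trace_ideal phi. t ^ N = 0"
    using nilpotent_ideal_power_eq_0[OF nil] by blast
  have defect: "e - e * e = phi em en"
    using E unfolding E_eq by (simp add: algebra_simps)
  then have "(e - e * e) ^ N = 0"
    using N phi_in_trace_ideal[of phi em en] by simp
  then obtain p h where idem: "eval_int_poly p e * eval_int_poly p e = eval_int_poly p e"
    and shift: "eval_int_poly p e - e = (e - e * e) * h"
    using lift_idempotent by blast
  define f where "f = eval_int_poly p e"
  define d where "d = f - e"
  have d: "d \<in> trace_ideal phi"
    unfolding d_def f_def shift defect
    by (rule trace_ideal_mult_right[OF pairing_phi phi_in_trace_ideal])
  txt \<open>The corner \<open>u\<close> of the unit is invertible modulo \<open>MN\<close>, hence so is \<open>u - d\<close>.\<close>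
  have "(u - d) * v = 1 - (phi um vn + d * v)" and "v * (u - d) = 1 - (phi vm un + v * d)"
    using UV unfolding U_eq V_eq by (simp_all add: morita_one_def algebra_simps)
  moreover have "phi um vn + d * v \<in> trace_ideal phi" and "phi vm un + v * d \<in> trace_ideal phi"
    using d by (simp_all add: trace_ideal_add phi_in_trace_ideal
        trace_ideal_mult_right[OF pairing_phi] trace_ideal_mult_left[OF pairing_phi])
  then have "(phi um vn + d * v) ^ N = 0" and "(phi vm un + v * d) ^ N = 0"
    using N by simp_all
  ultimately have "unit_op 1 (*) (u - d)"
    by (rule unit_op_if_inverse_modulo_nilpotent)
  moreover have "fst X = f + (u - d)"
    unfolding X E_eq U_eq d_def by simp
  ultimately show ?thesis
    unfolding clean_op_def idem_op_def using idem f_def by blast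
qed

lemma nilpotent_corner_defect:
  assumes "nilpotent_ideal (trace_ideal phi)" and "CSNC TYPE('a)"
    and "clean_op morita_one morita_add mul X"
  shows "\<exists>k. (fst X - fst X * fst X) ^ k = 0"
  using clean_op_corner[OF assms(1,3)] assms(2)
  unfolding CSNC_def CSNC_op_def snc_op_iff_nilpotent_defect by blast

lemma fst_pow_modulo_trace_ideal: "fst (pow Y r) - fst Y ^ r \<in> trace_ideal phi"
proof (induction r)
  case 0
  then show ?case
    by (simp add: morita_one_def zero_in_trace_ideal)
next
  case (Suc r)
  obtain a m n b where P: "pow Y r = (a, m, n, b)"
    by (cases "pow Y r")
  obtain y1 y2 y3 y4 where Y: "Y = (y1, y2, y3, y4)"
    by (cases Y)
  have "y1 * (a - y1 ^ r) + phi y2 n \<in> trace_ideal phi"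
    using Suc P Y by (simp add: trace_ideal_add trace_ideal_mult_left[OF pairing_phi] phi_in_trace_ideal)
  moreover have "fst (pow Y (Suc r)) - fst Y ^ Suc r = y1 * (a - y1 ^ r) + phi y2 n"
    using P Y by (simp add: algebra_simps)
  ultimately show ?case
    by simp
qed

lemma fst_pow_defect_in_trace_ideal:
  assumes "(fst X - fst X * fst X) ^ k = 0" and "k \<le> r"
  shows "fst (pow (X - mul X X) r) \<in> trace_ideal phi"
proof -
  obtain a m n b where X: "X = (a, m, n, b)"
    by (cases X)
  have "(a - a * a) ^ r = (a - a * a) ^ k * (a - a * a) ^ (r - k)"
    using assms(2) by (simp flip: power_add)
  then have "(a - a * a) ^ r = 0"
    using assms(1) X by simp
  moreover have "fst (X - mul X X) = (a - a * a) - phi m n"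
    unfolding X by (simp add: algebra_simps)
  ultimately have "fst (pow (X - mul X X) r) = (fst (pow (X - mul X X) r) - fst (X - mul X X) ^ r)
      + (((a - a * a) - phi m n) ^ r - (a - a * a) ^ r)"
    by simp
  then show ?thesis
    using trace_ideal_add[OF fst_pow_modulo_trace_ideal
        power_diff_in_trace_ideal[OF pairing_phi phi_in_trace_ideal]] by metis
qed

lemma morita_CSNC_if_CSNC:
  assumes nil: "nilpotent_ideal (trace_ideal phi)" "nilpotent_ideal (trace_ideal psi)"
    and CSNC: "CSNC TYPE('a)" "CSNC TYPE('b)"
  shows "morita_CSNC lM rM lN rN phi psi"
  unfolding morita_CSNC_def CSNC_op_def
proof (intro allI impI)
  interpret flipped: morita_ring lN rN lM rM psi phi
    by (rule morita_ring_flipped)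
  fix X
  assume clean: "clean_op morita_one morita_add mul X"
  obtain ka where ka: "(fst X - fst X * fst X) ^ ka = 0"
    using nilpotent_corner_defect[OF nil(1) CSNC(1) clean] by blast
  obtain kb where kb: "(fst (morita_flip X) - fst (morita_flip X) * fst (morita_flip X)) ^ kb = 0"
    using flipped.nilpotent_corner_defect[OF nil(2) CSNC(2) clean_op_flip[OF clean]] by blast
  define Y where "Y = X - mul X X"
  obtain a m n b where P: "pow Y (ka + kb) = (a, m, n, b)"
    by (cases "pow Y (ka + kb)")
  have a: "a \<in> trace_ideal phi"
    using fst_pow_defect_in_trace_ideal[OF ka, of "ka + kb"] P by (simp add: Y_def)
  have b: "b \<in> trace_ideal psi"
    using flipped.fst_pow_defect_in_trace_ideal[OF kb, of "ka + kb"] P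
    by (simp add: Y_def flip_mul[symmetric] morita_flip_diff[symmetric] flip_pow[symmetric])
  have "\<exists>s. pow (pow Y (ka + kb)) s = 0"
    unfolding P by (rule pow_eq_0_if_diagonal_in_trace_ideals[OF nil a b])
  then obtain s where "pow (pow Y (ka + kb)) s = 0" ..
  then show "snc_op morita_zero morita_one morita_add mul X"
    unfolding snc_op_iff_nilpotent_defect_morita Y_def pow_mult[symmetric] by blast
qed

end

theorem theorem2p20:
  fixes lM :: "'a::ring_1 \<Rightarrow> 'm::ab_group_add \<Rightarrow> 'm"
    and rM :: "'m \<Rightarrow> 'b::ring_1 \<Rightarrow> 'm"
    and lN :: "'b \<Rightarrow> 'n::ab_group_add \<Rightarrow> 'n"
    and rN :: "'n \<Rightarrow> 'a \<Rightarrow> 'n"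
    and phi :: "'m \<Rightarrow> 'n \<Rightarrow> 'a"
    and psi :: "'n \<Rightarrow> 'm \<Rightarrow> 'b"
  assumes "morita_context lM rM lN rN phi psi"
    and "nilpotent_ideal (trace_ideal phi)"
    and "nilpotent_ideal (trace_ideal psi)"
  shows "morita_CSNC lM rM lN rN phi psi \<longleftrightarrow> CSNC TYPE('a) \<and> CSNC TYPE('b)"
proof -
  interpret morita_ring lM rM lN rN phi psi
    using assms(1) by (rule morita_ring.intro)
  interpret flipped: morita_ring lN rN lM rM psi phi
    by (rule morita_ring_flipped)
  show ?thesis
    using CSNC_if_morita_CSNC flipped.CSNC_if_morita_CSNC[OF morita_CSNC_flip]
      morita_CSNC_if_CSNC[OF assms(2,3)] by blast
qed

end
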